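(* Let $k\ge2$ and $n\ge1$. For every permutation $P$ of $\{1,\dots,k^n\}$, there is a strategy for labeled chip-firing starting with $k^{2n}$ chips labeled $1,\dots,k^{2n}$ at the root of the infinite rooted directed $k$-ary tree whose stable configuration (a permutation of $\{1,\dots,k^{2n}\}$) contains a subsequence of length $k^n$ that is order-isomorphic to $P$.
   Context: Labeled chip-firing on the infinite rooted directed $k$-ary tree (each vertex has $k$ children ordered left to right, root on layer $1$): a vertex with at least $k$ chips may fire by choosing any $k$ of its chips and sending the $i$-th smallest label among them to its $i$-th leftmost child. A strategy is a sequence of legal firings continued until no vertex has $\ge k$ chips. Starting with $k^p$ chips at the root, every stable configuration has exactly one chip on each vertex of layer $p+1$ and none elsewhere, and is identified with the permutation of labels read left to right on layer $p+1$. A sequence $w_1,\dots,w_n$ of distinct numbers is order-isomorphic to a permutation $\sigma\in S_n$ if, for each $j$, $w_j$ is the $\sigma_j$-th smallest of $w_1,\dots,w_n$. *)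

theory Defs
  imports Main
begin

text \<open>Vertices of the infinite rooted k-ary tree are lists of child indices
  (each in 0..k-1); the root is the empty list, layer of v is length v + 1,
  and the i-th leftmost child (0-indexed) of v is v @ [i].\<close>

type_synonym config = "nat list \<Rightarrow> nat set"

definition fire :: "nat \<Rightarrow> config \<Rightarrow> nat list \<Rightarrow> nat set \<Rightarrow> config" where
  "fire k C v S = (\<lambda>u.
     if u = v then C v - S
     else if (\<exists>i<k. u = v @ [i])
          then C u \<union> {sorted_list_of_set S ! (last u)}
          else C u)"

definition fire_step :: "nat \<Rightarrow> config \<Rightarrow> config \<Rightarrow> bool" where
  "fire_step k C C' \<longleftrightarrow>
     (\<exists>v S. S \<subseteq> C v \<and> finite S \<and> card S = k \<and> C' = fire k C v S)"

definition stable :: "nat \<Rightarrow> config \<Rightarrow> bool" where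
  "stable k C \<longleftrightarrow> (\<forall>v. finite (C v) \<and> card (C v) < k)"

definition init_config :: "nat \<Rightarrow> config" where
  "init_config N = (\<lambda>u. if u = [] then {1..N} else {})"

text \<open>A strategy is a finite sequence of legal firings ending in a stable
  configuration; its result is a stable configuration reachable by firings.\<close>
definition strategy_result :: "nat \<Rightarrow> nat \<Rightarrow> config \<Rightarrow> bool" where
  "strategy_result k N C \<longleftrightarrow> (fire_step k)\<^sup>*\<^sup>* (init_config N) C \<and> stable k C"

text \<open>The j-th vertex (0-indexed, left to right) of the layer consisting of
  vertices of depth m: base-k digits of j, most significant first.\<close>
definition layer_vertex :: "nat \<Rightarrow> nat \<Rightarrow> nat \<Rightarrow> nat list" where
  "layer_vertex k m j = map (\<lambda>i. j div k ^ (m - 1 - i) mod k) [0..<m]"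

text \<open>Reading the labels left to right on layer p+1 (depth p); each such vertex
  holds exactly one chip in a stable configuration.\<close>
definition read_layer :: "nat \<Rightarrow> nat \<Rightarrow> config \<Rightarrow> nat list" where
  "read_layer k p C = map (\<lambda>j. THE x. C (layer_vertex k p j) = {x}) [0..<k ^ p]"

text \<open>Order-isomorphism: w_j is the sigma_j-th smallest of w (sigma 1-indexed).\<close>
definition order_iso :: "nat list \<Rightarrow> nat list \<Rightarrow> bool" where
  "order_iso w \<sigma> \<longleftrightarrow> distinct w \<and> length w = length \<sigma> \<and>
     (\<forall>j<length w. \<sigma> ! j = card {i. i < length w \<and> w ! i \<le> w ! j})"

definition contains_pattern :: "nat list \<Rightarrow> nat list \<Rightarrow> bool" where
  "contains_pattern w \<sigma> \<longleftrightarrow>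
     (\<exists>idx. strict_mono_on {..<length \<sigma>} idx \<and> (\<forall>i<length \<sigma>. idx i < length w) \<and>
            order_iso (map (\<lambda>i. w ! idx i) [0..<length \<sigma>]) \<sigma>)"

definition is_perm_list :: "nat \<Rightarrow> nat list \<Rightarrow> bool" where
  "is_perm_list m P \<longleftrightarrow> distinct P \<and> set P = {1..m}"

end

theory Submission
  imports Defs
begin

text \<open>Greedy dispersal realises the digit-reversal permutation: if every vertex always fires its
  chips in consecutive blocks of k, starting from the smallest, then the leaf whose path from the
  root has child indices d(1), ..., d(m) receives the label
  1 + d(1) + d(2) k + ... + d(m) k^(m-1), so the layer read left to right is
  j |-> 1 + rev(j), where rev reverses the m base-k digits of j. On layer 2n write a position as
  a k^n + b with a, b < k^n; it carries 1 + rev(a) + k^n rev(b). Choosing in block a the position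
  with rev(b) = P(a) - 1 yields k^n entries, one per block and hence left to right, that are
  ordered exactly as P, because the high part k^n rev(b) dominates.\<close>

fun radix_value :: "nat \<Rightarrow> nat list \<Rightarrow> nat" where
  "radix_value k [] = 0"
| "radix_value k (d # ds) = d + k * radix_value k ds"

definition digit_reversal :: "nat \<Rightarrow> nat \<Rightarrow> nat \<Rightarrow> nat" where
  "digit_reversal k m j = radix_value k (layer_vertex k m j)"

lemma layer_vertex_Suc: "layer_vertex k (Suc m) j = layer_vertex k m (j div k) @ [j mod k]"
proof -
  have "map (\<lambda>i. j div k ^ (Suc m - 1 - i) mod k) [0..<m] =
        map (\<lambda>i. j div k div k ^ (m - 1 - i) mod k) [0..<m]"
  proof (rule map_cong[OF refl])
    fix i assume "i \<in> set [0..<m]"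
    hence "Suc m - 1 - i = Suc (m - 1 - i)" by auto
    thus "j div k ^ (Suc m - 1 - i) mod k = j div k div k ^ (m - 1 - i) mod k"
      by (simp add: div_mult2_eq)
  qed
  thus ?thesis by (simp add: layer_vertex_def)
qed

lemma length_layer_vertex [simp]: "length (layer_vertex k m j) = m"
  by (simp add: layer_vertex_def)

lemma layer_vertex_digits_less: "k > 0 \<Longrightarrow> x \<in> set (layer_vertex k m j) \<Longrightarrow> x < k"
  by (auto simp: layer_vertex_def)

lemma radix_value_snoc: "radix_value k (ds @ [d]) = radix_value k ds + k ^ length ds * d"
  by (induction ds) (auto simp: algebra_simps)

lemma radix_value_less:
  assumes "k > 0" "\<forall>d\<in>set ds. d < k"
  shows "radix_value k ds < k ^ length ds"
  using assms(2)
proof (induction ds)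
  case Nil thus ?case by simp
next
  case (Cons d ds)
  hence "radix_value k ds + 1 \<le> k ^ length ds" "d < k" by auto
  hence "k * radix_value k ds + k \<le> k * k ^ length ds"
    by (metis add_mult_distrib2 mult.right_neutral mult_le_mono2)
  with \<open>d < k\<close> show ?case by simp
qed

lemma digit_reversal_0 [simp]: "digit_reversal k 0 j = 0"
  by (simp add: digit_reversal_def layer_vertex_def)

lemma digit_reversal_Suc:
  "digit_reversal k (Suc m) j = digit_reversal k m (j div k) + k ^ m * (j mod k)"
  by (simp add: digit_reversal_def layer_vertex_Suc radix_value_snoc)

lemma digit_reversal_less: "k > 0 \<Longrightarrow> digit_reversal k m j < k ^ m"
  using radix_value_less[of k "layer_vertex k m j"]
  by (simp add: digit_reversal_def layer_vertex_digits_less)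

lemma digit_reversal_surj:
  assumes "k > 0" "t < k ^ m"
  shows "\<exists>j < k ^ m. digit_reversal k m j = t"
  using assms(2)
proof (induction m arbitrary: t)
  case 0 thus ?case by simp
next
  case (Suc m)
  define d where "d = t div k ^ m"
  have d: "d < k" using Suc.prems by (simp add: d_def less_mult_imp_div_less)
  obtain j where j: "j < k ^ m" "digit_reversal k m j = t mod k ^ m"
    using Suc.IH assms(1) by (meson mod_less_divisor zero_less_power)
  have "j * k + d < (j + 1) * k" using d by simp
  also have "\<dots> \<le> k ^ m * k" using j(1) by (intro mult_le_mono1) simp
  also have "\<dots> = k ^ Suc m" by (simp add: mult.commute)
  finally have "j * k + d < k ^ Suc m" .
  moreover have "digit_reversal k (Suc m) (j * k + d) = t"
    using d j(2) assms(1) by (simp add: digit_reversal_Suc d_def mult.commute)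
  ultimately show ?case by blast
qed

text \<open>The low digits of a position become the high digits of its reversal.\<close>
lemma digit_reversal_add:
  assumes "k > 0" "b < k ^ m2"
  shows "digit_reversal k (m1 + m2) (a * k ^ m2 + b) =
         digit_reversal k m1 a + k ^ m1 * digit_reversal k m2 b"
  using assms(2)
proof (induction m2 arbitrary: b)
  case 0 thus ?case by simp
next
  case (Suc m2)
  have split: "a * k ^ Suc m2 + b = b + k * (a * k ^ m2)" by (simp add: algebra_simps)
  have div: "(a * k ^ Suc m2 + b) div k = a * k ^ m2 + b div k"
    unfolding split using assms(1) by simp
  have mod: "(a * k ^ Suc m2 + b) mod k = b mod k"
    unfolding split by simp
  have "b div k < k ^ m2" using Suc.prems assms(1)
    by (simp add: div_less_iff_less_mult mult.commute)
  note IH = Suc.IH[OF this]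
  have "digit_reversal k (m1 + Suc m2) (a * k ^ Suc m2 + b) =
      digit_reversal k (m1 + m2) (a * k ^ m2 + b div k) + k ^ (m1 + m2) * (b mod k)"
    by (simp only: add_Suc_right digit_reversal_Suc div mod)
  also have "\<dots> = digit_reversal k m1 a +
      k ^ m1 * (digit_reversal k m2 (b div k) + k ^ m2 * (b mod k))"
    using IH by (simp add: algebra_simps power_add)
  also have "\<dots> = digit_reversal k m1 a + k ^ m1 * digit_reversal k (Suc m2) b"
    by (simp add: digit_reversal_Suc)
  finally show ?case .
qed

lemma add_mult_less_add_mult:
  fixes x y p q K :: nat
  assumes "x < K" "p < q"
  shows "x + K * p < y + K * q"
proof -
  have "x + K * p < K * Suc p" using assms(1) by simp
  also have "\<dots> \<le> K * q" using assms(2) by (intro mult_le_mono2) simp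
  finally show ?thesis by linarith
qed

lemma add_mult_le_add_mult_iff:
  fixes x y p q K :: nat
  assumes "x < K" "y < K" "p \<noteq> q"
  shows "x + K * p \<le> y + K * q \<longleftrightarrow> p < q"
  using add_mult_less_add_mult[OF assms(1), of p q y] add_mult_less_add_mult[OF assms(2), of q p x]
    assms(3) by (auto simp: nat_neq_iff)

lemma card_nth_le_of_perm_list:
  assumes "distinct P" "set P = {1..length P}" "j < length P"
  shows "card {i. i < length P \<and> P ! i \<le> P ! j} = P ! j"
proof -
  have "inj_on (\<lambda>i. P ! i) {i. i < length P \<and> P ! i \<le> P ! j}"
    using assms(1) by (auto simp: inj_on_def nth_eq_iff_index_eq)
  moreover have "(\<lambda>i. P ! i) ` {i. i < length P \<and> P ! i \<le> P ! j} = {x \<in> set P. x \<le> P ! j}"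
    by (auto simp: in_set_conv_nth)
  moreover have "{x \<in> set P. x \<le> P ! j} = {1..P ! j}"
    using assms(2,3) nth_mem[OF assms(3)] by auto
  ultimately show ?thesis by (metis card_atLeastAtMost card_image diff_Suc_1)
qed

lemma order_iso_if_order_preserving:
  assumes "distinct P" "set P = {1..length P}"
    and "\<And>a b. a < length P \<Longrightarrow> b < length P \<Longrightarrow> f a \<le> f b \<longleftrightarrow> P ! a \<le> P ! b"
  shows "order_iso (map f [0..<length P]) P"
  unfolding order_iso_def
proof (intro conjI allI impI)
  have "inj_on f {0..<length P}"
  proof (rule inj_onI)
    fix a b assume "a \<in> {0..<length P}" "b \<in> {0..<length P}" "f a = f b"
    then show "a = b" using assms(3)[of a b] assms(3)[of b a] assms(1)
      by (auto simp: nth_eq_iff_index_eq)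
  qed
  then show "distinct (map f [0..<length P])" by (simp add: distinct_map)
  show "length (map f [0..<length P]) = length P" by simp
  fix j assume "j < length (map f [0..<length P])"
  then have j: "j < length P" by simp
  have "{i. i < length (map f [0..<length P]) \<and> map f [0..<length P] ! i \<le> map f [0..<length P] ! j}
      = {i. i < length P \<and> P ! i \<le> P ! j}"
    using assms(3) j by auto
  then show "P ! j = card {i. i < length (map f [0..<length P]) \<and>
      map f [0..<length P] ! i \<le> map f [0..<length P] ! j}"
    using card_nth_le_of_perm_list[OF assms(1,2) j] by simp
qed

lemma contains_pattern_if_order_preserving:
  assumes "distinct P" "set P = {1..length P}"
    and "strict_mono_on {..<length P} idx" "\<And>i. i < length P \<Longrightarrow> idx i < length w"
    and "\<And>a b. a < length P \<Longrightarrow> b < length P \<Longrightarrow>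
      w ! idx a \<le> w ! idx b \<longleftrightarrow> P ! a \<le> P ! b"
  shows "contains_pattern w P"
  unfolding contains_pattern_def
  using assms order_iso_if_order_preserving[of P "\<lambda>i. w ! idx i"] by blast

lemma digit_reversal_contains_pattern:
  assumes "k > 0" "is_perm_list (k ^ n) P"
  shows "contains_pattern (map (\<lambda>j. Suc (digit_reversal k (n + n) j)) [0..<k ^ (n + n)]) P"
proof -
  define K where "K = k ^ n"
  have P: "distinct P" "set P = {1..K}"
    using assms(2) by (auto simp: is_perm_list_def K_def)
  then have lenP: "length P = K" using distinct_card by fastforce
  have P_range: "1 \<le> P ! a \<and> P ! a \<le> K" if "a < K" for a
    using nth_mem[of a P] that lenP P(2) by auto
  have "\<exists>c<K. digit_reversal k n c = P ! a - 1" if "a < K" for a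
  proof -
    have "P ! a - 1 < K" using P_range[OF that] by linarith
    then show ?thesis using digit_reversal_surj[OF assms(1)] by (simp add: K_def)
  qed
  then obtain c where c: "c a < K" "digit_reversal k n (c a) = P ! a - 1" if "a < K" for a
    by metis
  define idx where "idx a = c a + K * a" for a
  have idx_mono: "idx a < idx b" if "a < b" "b < K" for a b
    using add_mult_less_add_mult c(1) that by (simp add: idx_def)
  have idx_less: "idx a < K * K" if "a < K" for a
    using add_mult_less_add_mult[OF c(1)[OF that] that, of 0] by (simp add: idx_def)
  define w where "w = map (\<lambda>j. Suc (digit_reversal k (n + n) j)) [0..<k ^ (n + n)]"
  have w_idx: "w ! idx a = Suc (digit_reversal k n a + K * (P ! a - 1))" if "a < K" for a
    using idx_less[OF that] c[OF that]
      digit_reversal_add[OF assms(1) c(1)[OF that, unfolded K_def], of n a]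
    by (simp add: w_def idx_def K_def power_add mult.commute add.commute)
  have "w ! idx a \<le> w ! idx b \<longleftrightarrow> P ! a \<le> P ! b" if "a < K" "b < K" for a b
  proof (cases "a = b")
    case False
    then have "P ! a \<noteq> P ! b" using P(1) lenP that by (simp add: nth_eq_iff_index_eq)
    with P_range[OF that(1)] P_range[OF that(2)]
    have "P ! a - 1 \<noteq> P ! b - 1" "P ! a - 1 < P ! b - 1 \<longleftrightarrow> P ! a \<le> P ! b" by linarith+
    then show ?thesis
      using add_mult_le_add_mult_iff[OF digit_reversal_less digit_reversal_less] assms(1)
      by (simp add: w_idx[OF that(1)] w_idx[OF that(2)] K_def)
  qed simp
  moreover have "strict_mono_on {..<length P} idx"
    using idx_mono lenP by (auto intro: strict_mono_onI)
  moreover have "idx i < length w" if "i < length P" for i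
    using idx_less that lenP by (simp add: w_def K_def power_add)
  ultimately show ?thesis
    using contains_pattern_if_order_preserving[OF P(1)] P(2) lenP unfolding w_def by simp
qed

lemma sorted_list_of_set_strict_mono_image:
  assumes "strict_mono g"
  shows "sorted_list_of_set (g ` {a..<b}) = map g [a..<b]"
proof -
  have sorted: "sorted_wrt (<) (map g [a..<b])"
    using assms by (auto simp: sorted_wrt_iff_nth_less strict_mono_less)
  then have "length (map g [a..<b]) = card (g ` {a..<b})"
    by (metis distinct_card list.set_map set_upt strict_sorted_iff)
  with sorted show ?thesis
    using sorted_list_of_set_unique[of "g ` {a..<b}" "map g [a..<b]"] by simp
qed

definition child_labels :: "nat \<Rightarrow> (nat \<Rightarrow> nat) \<Rightarrow> nat \<Rightarrow> nat \<Rightarrow> nat" where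
  "child_labels k g i = (\<lambda>t. g (t * k + i))"

lemma strict_mono_child_labels: "strict_mono g \<Longrightarrow> k > 0 \<Longrightarrow> strict_mono (child_labels k g i)"
  unfolding child_labels_def strict_mono_def by simp

text \<open>The configuration after v, holding g 0 < ... < g (k M - 1), has fired j times, each time
  using its k smallest chips; child i then holds g i, g (k + i), ..., g ((j - 1) k + i).\<close>
definition block_fired :: "nat \<Rightarrow> (nat \<Rightarrow> nat) \<Rightarrow> nat list \<Rightarrow> config \<Rightarrow> nat \<Rightarrow> nat \<Rightarrow> config" where
  "block_fired k g v C M j = (\<lambda>u.
     if u = v then g ` {k * j..<k * M}
     else if \<exists>i<k. u = v @ [i] then child_labels k g (last u) ` {..<j}
     else C u)"

lemma block_fired_reachable:
  assumes g: "strict_mono g" and k: "k > 0" and Cv: "C v = g ` {..<k * M}"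
    and children: "\<forall>i. C (v @ [i]) = {}" and "j \<le> M"
  shows "(fire_step k)\<^sup>*\<^sup>* C (block_fired k g v C M j)"
  using \<open>j \<le> M\<close>
proof (induction j)
  case 0
  have "block_fired k g v C M 0 = C"
    using Cv children by (auto simp: block_fired_def lessThan_atLeast0 fun_eq_iff)
  then show ?case by simp
next
  case (Suc j)
  let ?S = "g ` {k * j..<k * j + k}"
  have "k * j + k \<le> k * M" using Suc.prems mult_le_mono2[of "Suc j" M k] by simp
  then have S_sub: "?S \<subseteq> block_fired k g v C M j v" by (auto simp: block_fired_def)
  have card_S: "card ?S = k"
    using strict_mono_imp_inj_on[OF g] by (simp add: card_image inj_on_subset)
  have "{k * j..<k * M} - {k * j..<k * j + k} = {k * Suc j..<k * M}" by auto
  then have v_rest: "g ` {k * j..<k * M} - ?S = g ` {k * Suc j..<k * M}"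
    by (metis image_set_diff[OF strict_mono_imp_inj_on[OF g]])
  have nth_S: "sorted_list_of_set ?S ! i = child_labels k g i j" if "i < k" for i
    using that by (simp add: sorted_list_of_set_strict_mono_image[OF g] child_labels_def mult.commute)
  have "block_fired k g v C M (Suc j) u = fire k (block_fired k g v C M j) v ?S u" for u
  proof (cases "u = v")
    case True
    with v_rest show ?thesis by (simp add: block_fired_def fire_def)
  next
    case u_not_v: False
    show ?thesis
    proof (cases "\<exists>i<k. u = v @ [i]")
      case True
      then obtain i where "i < k" "u = v @ [i]" by blast
      with nth_S show ?thesis by (auto simp: block_fired_def fire_def lessThan_Suc)
    next
      case False
      with u_not_v show ?thesis by (auto simp: block_fired_def fire_def)
    qed
  qed
  then have "block_fired k g v C M (Suc j) = fire k (block_fired k g v C M j) v ?S" ..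
  then have "fire_step k (block_fired k g v C M j) (block_fired k g v C M (Suc j))"
    unfolding fire_step_def using S_sub card_S by blast
  with Suc show ?case by simp
qed

text \<open>The chips at the vertex reached by the path w below the dispersed vertex: the leaves at
  depth h carry the labels g (radix_value k w), everything else is empty.\<close>
definition dispersal_labels :: "nat \<Rightarrow> nat \<Rightarrow> (nat \<Rightarrow> nat) \<Rightarrow> nat list \<Rightarrow> nat set" where
  "dispersal_labels k h g w =
     (if length w = h \<and> (\<forall>d\<in>set w. d < k) then {g (radix_value k w)} else {})"

definition disperse :: "nat \<Rightarrow> nat \<Rightarrow> (nat \<Rightarrow> nat) \<Rightarrow> nat list \<Rightarrow> config \<Rightarrow> config" where
  "disperse k h g v C = (\<lambda>u.
     if \<exists>w. u = v @ w then dispersal_labels k h g (drop (length v) u) else C u)"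

lemma dispersal_labels_Cons:
  "i < k \<Longrightarrow> dispersal_labels k h (child_labels k g i) w = dispersal_labels k (Suc h) g (i # w)"
  by (auto simp: dispersal_labels_def child_labels_def add.commute mult.commute)

definition disperse_children ::
    "nat \<Rightarrow> nat \<Rightarrow> (nat \<Rightarrow> nat) \<Rightarrow> nat list \<Rightarrow> nat \<Rightarrow> config \<Rightarrow> config" where
  "disperse_children k h g v m C = (\<lambda>u.
     if \<exists>i<m. \<exists>w. u = v @ i # w then dispersal_labels k (Suc h) g (drop (length v) u) else C u)"

lemma disperse_children_0 [simp]: "disperse_children k h g v 0 C = C"
  by (simp add: disperse_children_def)

lemma disperse_children_Suc:
  assumes "m < k"
  shows "disperse k h (child_labels k g m) (v @ [m]) (disperse_children k h g v m C) =
         disperse_children k h g v (Suc m) C"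
proof
  fix u
  show "disperse k h (child_labels k g m) (v @ [m]) (disperse_children k h g v m C) u =
        disperse_children k h g v (Suc m) C u"
  proof (cases "\<exists>w. u = v @ m # w")
    case True
    then show ?thesis
      using dispersal_labels_Cons[OF assms] by (auto simp: disperse_def disperse_children_def)
  next
    case False
    then have "(\<exists>i<Suc m. \<exists>w. u = v @ i # w) \<longleftrightarrow> (\<exists>i<m. \<exists>w. u = v @ i # w)"
      by (auto simp: less_Suc_eq)
    with False show ?thesis by (simp add: disperse_def disperse_children_def)
  qed
qed

lemma disperse_children_all:
  assumes "C v = {}" "\<And>i w. k \<le> i \<Longrightarrow> C (v @ i # w) = {}"
  shows "disperse_children k h g v k C = disperse k (Suc h) g v C"
proof
  fix u
  show "disperse_children k h g v k C u = disperse k (Suc h) g v C u"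
  proof (cases "\<exists>w. u = v @ w")
    case True
    then obtain w where u: "u = v @ w" by blast
    show ?thesis
    proof (cases w)
      case Nil
      then show ?thesis using u assms(1)
        by (simp add: disperse_children_def disperse_def dispersal_labels_def)
    next
      case (Cons i w')
      then show ?thesis using u assms(2)[of i w']
        by (auto simp: disperse_children_def disperse_def dispersal_labels_def)
    qed
  next
    case False
    then show ?thesis by (auto simp: disperse_children_def disperse_def)
  qed
qed

lemma disperse_children_block_fired:
  assumes "\<forall>w. w \<noteq> [] \<longrightarrow> C (v @ w) = {}"
  shows "disperse_children k h g v k (block_fired k g v C M M) = disperse k (Suc h) g v C"
proof -
  have "disperse_children k h g v k (block_fired k g v C M M) =
      disperse k (Suc h) g v (block_fired k g v C M M)"
    using assms by (intro disperse_children_all) (auto simp: block_fired_def)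
  also have "\<dots> = disperse k (Suc h) g v C"
    by (auto simp: disperse_def block_fired_def fun_eq_iff)
  finally show ?thesis .
qed

text \<open>Greedy dispersal: fire v until it is empty, then recursively disperse below each child,
  from left to right.\<close>
lemma disperse_reachable:
  assumes "strict_mono g" "k > 0" "C v = g ` {..<k ^ h}" "\<forall>w. w \<noteq> [] \<longrightarrow> C (v @ w) = {}"
  shows "(fire_step k)\<^sup>*\<^sup>* C (disperse k h g v C)"
  using assms
proof (induction h arbitrary: g v C)
  case 0
  then have "disperse k 0 g v C = C"
    by (auto simp: disperse_def dispersal_labels_def fun_eq_iff lessThan_Suc)
  then show ?case by simp
next
  case (Suc h)
  note disperse_IH = Suc.IH
  note g = Suc.prems(1) and k = Suc.prems(2) and below = Suc.prems(4)
  define C1 where "C1 = block_fired k g v C (k ^ h) (k ^ h)"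
  have fired: "(fire_step k)\<^sup>*\<^sup>* C C1"
    unfolding C1_def using Suc.prems by (intro block_fired_reachable) (auto simp: mult.commute)
  have C1_child: "C1 (v @ [i]) = child_labels k g i ` {..<k ^ h}" if "i < k" for i
    using that by (simp add: C1_def block_fired_def)
  have C1_below: "C1 (v @ i # w) = C (v @ i # w)" if "w \<noteq> [] \<or> k \<le> i" for i w
    using that by (auto simp: C1_def block_fired_def)
  have "(fire_step k)\<^sup>*\<^sup>* C1 (disperse_children k h g v m C1)" if "m \<le> k" for m
    using that
  proof (induction m)
    case 0 then show ?case by simp
  next
    case (Suc m)
    let ?D = "disperse_children k h g v m C1"
    have "?D (v @ [m]) = child_labels k g m ` {..<k ^ h}"
      using C1_child Suc.prems by (simp add: disperse_children_def)
    moreover have "\<forall>w. w \<noteq> [] \<longrightarrow> ?D ((v @ [m]) @ w) = {}"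
      using C1_below below by (simp add: disperse_children_def)
    ultimately have "(fire_step k)\<^sup>*\<^sup>* ?D (disperse k h (child_labels k g m) (v @ [m]) ?D)"
      by (rule disperse_IH[OF strict_mono_child_labels[OF g k] k])
    with Suc show ?case by (simp add: disperse_children_Suc)
  qed
  moreover have "disperse_children k h g v k C1 = disperse k (Suc h) g v C"
    unfolding C1_def using below by (rule disperse_children_block_fired)
  ultimately show ?case using fired by (metis order_refl rtranclp_trans)
qed

lemma strategy_result_disperse:
  assumes "k \<ge> 2"
  shows "strategy_result k (k ^ h) (disperse k h Suc [] (init_config (k ^ h)))"
proof -
  have "(fire_step k)\<^sup>*\<^sup>* (init_config (k ^ h)) (disperse k h Suc [] (init_config (k ^ h)))"
    using assms by (intro disperse_reachable)
      (auto simp: strict_mono_def init_config_def image_Suc_lessThan)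
  moreover have "stable k (disperse k h Suc [] (init_config (k ^ h)))"
    using assms by (auto simp: stable_def disperse_def dispersal_labels_def)
  ultimately show ?thesis by (simp add: strategy_result_def)
qed

lemma read_layer_disperse:
  assumes "k > 0"
  shows "read_layer k h (disperse k h Suc [] C) = map (\<lambda>j. Suc (digit_reversal k h j)) [0..<k ^ h]"
  using assms by (simp add: read_layer_def disperse_def dispersal_labels_def digit_reversal_def
      layer_vertex_digits_less)

theorem theorem4p2:
  fixes k n :: nat and P :: "nat list"
  assumes "k \<ge> 2" and "n \<ge> 1" and "is_perm_list (k ^ n) P"
  shows "\<exists>C. strategy_result k (k ^ (2 * n)) C \<and>
             contains_pattern (read_layer k (2 * n) C) P"
proof -
  have k: "k > 0" using assms(1) by simp
  let ?C = "disperse k (n + n) Suc [] (init_config (k ^ (n + n)))"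
  have "strategy_result k (k ^ (n + n)) ?C"
    using strategy_result_disperse[OF assms(1)] .
  moreover have "contains_pattern (read_layer k (n + n) ?C) P"
    using digit_reversal_contains_pattern[OF k assms(3)] by (simp add: read_layer_disperse[OF k])
  ultimately show ?thesis by (auto simp: mult_2)
qed

end
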